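(* Let $\mathcal{X},\mathcal{Y}$ be finite Markov chains and $C:{\bm X}\times{\bm Y}\to\mathbb{R}_+$ a cost function. Let $p\in\mathcal{P}(\mathbb{N})$ and let $(p_k)_{k\in\mathbb{N}}\subseteq\mathcal{P}(\mathbb{N})$ satisfy $\lim_{k\to\infty}d_{\mathrm{TV}}(p_k,p)=0$, where $d_{\mathrm{TV}}$ is the total variation distance. Then $\lim_{k\to\infty}d^{p_k}_{\mathrm{OTM}}(\mathcal{X},\mathcal{Y};C)=d^{p}_{\mathrm{OTM}}(\mathcal{X},\mathcal{Y};C)$.
   Context: A finite Markov chain $\mathcal{X}=({\bm X},m^{\bm X}_\bullet,\nu^{\bm X})$ consists of a finite set ${\bm X}$, a transition kernel $m^{\bm X}_\bullet:{\bm X}\to\mathcal{P}({\bm X})$ and an initial distribution $\nu^{\bm X}$. $\mathcal{C}(\alpha,\beta)$ denotes the set of couplings of $\alpha,\beta$. A Markovian coupling between $\mathcal{X}$ and $\mathcal{Y}$ is a (possibly time-inhomogeneous) Markov chain $(X_t,Y_t)_{t\in\mathbb{N}}$ on ${\bm X}\times{\bm Y}$ with $\mathrm{law}(X_0,Y_0)\in\mathcal{C}(\nu^{\bm X},\nu^{\bm Y})$ and, for all $t,x,y$, the conditional law of $(X_{t+1},Y_{t+1})$ given $(X_t,Y_t)=(x,y)$ in $\mathcal{C}(m^{\bm X}_x,m^{\bm Y}_y)$. For $q\in\mathcal{P}(\mathbb{N})$ and $T\sim q$, $d^{q}_{\mathrm{OTM}}(\mathcal{X},\mathcal{Y};C)=\inf\mathbb{E}\,C(X_T,Y_T)$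 over all Markovian couplings independent of $T$. *)

theory Defs
  imports "HOL-Probability.Probability"
begin

text \<open>A finite Markov chain is given by a finite state type, a transition kernel
  and an initial distribution.  Couplings of two pmfs:\<close>

definition is_coupling :: "('a \<times> 'b) pmf \<Rightarrow> 'a pmf \<Rightarrow> 'b pmf \<Rightarrow> bool" where
  "is_coupling \<pi> \<alpha> \<beta> \<longleftrightarrow> map_pmf fst \<pi> = \<alpha> \<and> map_pmf snd \<pi> = \<beta>"

definition markovian_coupling ::
  "('x \<Rightarrow> 'x pmf) \<Rightarrow> 'x pmf \<Rightarrow> ('y \<Rightarrow> 'y pmf) \<Rightarrow> 'y pmf \<Rightarrow>
   ('x \<times> 'y) pmf \<Rightarrow> (nat \<Rightarrow> 'x \<times> 'y \<Rightarrow> ('x \<times> 'y) pmf) \<Rightarrow> bool" where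
  "markovian_coupling mX nuX mY nuY \<pi>0 K \<longleftrightarrow>
     is_coupling \<pi>0 nuX nuY \<and> (\<forall>t x y. is_coupling (K t (x, y)) (mX x) (mY y))"

primrec coupling_law ::
  "('x \<times> 'y) pmf \<Rightarrow> (nat \<Rightarrow> 'x \<times> 'y \<Rightarrow> ('x \<times> 'y) pmf) \<Rightarrow> nat \<Rightarrow> ('x \<times> 'y) pmf" where
  "coupling_law \<pi>0 K 0 = \<pi>0"
| "coupling_law \<pi>0 K (Suc t) = bind_pmf (coupling_law \<pi>0 K t) (K t)"

text \<open>d^q_OTM: infimum over Markovian couplings (independent of T \<sim> q) of
  E C(X_T, Y_T) = E_{T\<sim>q} [ E C(X_T,Y_T) | T ].\<close>

definition d_OTM ::
  "nat pmf \<Rightarrow> ('x \<Rightarrow> 'x pmf) \<Rightarrow> 'x pmf \<Rightarrow> ('y \<Rightarrow> 'y pmf) \<Rightarrow> 'y pmf \<Rightarrow>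
   ('x \<Rightarrow> 'y \<Rightarrow> real) \<Rightarrow> real" where
  "d_OTM q mX nuX mY nuY C =
     (INF \<pi>K \<in> {(\<pi>0, K). markovian_coupling mX nuX mY nuY \<pi>0 K}.
        measure_pmf.expectation q
          (\<lambda>t. measure_pmf.expectation (coupling_law (fst \<pi>K) (snd \<pi>K) t)
                 (\<lambda>(x, y). C x y)))"

definition d_TV :: "nat pmf \<Rightarrow> nat pmf \<Rightarrow> real" where
  "d_TV p q = (SUP A. \<bar>measure_pmf.prob p A - measure_pmf.prob q A\<bar>)"

end

theory Submission
  imports Defs
begin

text \<open>For every fixed Markovian coupling, the expected cost at time \<open>t\<close> lies in \<open>[0, max C]\<close>,
  so its expectations under two laws of \<open>T\<close> differ by at most \<open>max C\<close> times their total
  variation distance.  The set of couplings does not depend on the law of \<open>T\<close>, hence taking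
  the infimum shows that \<open>q \<mapsto> d\<^sup>q\<^sub>OTM\<close> is \<open>max C\<close>-Lipschitz with respect to \<open>d\<^sub>TV\<close>.\<close>

lemma abs_summable_pmf_times_bounded:
  fixes f :: "'a \<Rightarrow> real"
  assumes "\<And>x. \<bar>f x\<bar> \<le> M"
  shows "Infinite_Set_Sum.abs_summable_on (\<lambda>x. pmf q x * f x) A"
proof (rule abs_summable_on_comparison_test)
  show "Infinite_Set_Sum.abs_summable_on (\<lambda>x. pmf q x * M) A"
    by (intro abs_summable_on_cmult_left pmf_abs_summable)
  show "norm (pmf q x * f x) \<le> norm (pmf q x * M)" for x
    using assms[of x] by (auto simp: abs_mult intro: mult_left_mono order_trans[OF _ abs_ge_self])
qed

lemma expectation_diff_le_prob_diff:
  fixes f :: "'a \<Rightarrow> real" and p q :: "'a pmf"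
  assumes f_nonneg: "\<And>x. 0 \<le> f x" and f_le: "\<And>x. f x \<le> M"
  defines "A \<equiv> {x. pmf p x \<le> pmf q x}"
  shows "measure_pmf.expectation q f - measure_pmf.expectation p f
           \<le> M * (measure_pmf.prob q A - measure_pmf.prob p A)"
proof -
  have f_abs: "\<bar>f x\<bar> \<le> M" for x
    using f_nonneg[of x] f_le[of x] by simp
  note summable = abs_summable_pmf_times_bounded[OF f_abs]
  define g where "g x = (pmf q x - pmf p x) * f x" for x
  have g_summable: "Infinite_Set_Sum.abs_summable_on g B" for B
    unfolding g_def left_diff_distrib by (rule abs_summable_on_diff[OF summable summable])
  have "measure_pmf.expectation q f - measure_pmf.expectation p f = infsetsum g UNIV"
    unfolding g_def left_diff_distrib pmf_expectation_eq_infsetsum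
    by (simp add: infsetsum_diff summable)
  also have "\<dots> \<le> infsetsum g A"
    using g_summable f_nonneg
    by (intro infsetsum_mono_neutral_right) (auto simp: g_def A_def mult_nonpos_nonneg)
  also have "\<dots> \<le> infsetsum (\<lambda>x. (pmf q x - pmf p x) * M) A"
    using g_summable f_le
    by (intro infsetsum_mono abs_summable_on_cmult_left abs_summable_on_diff pmf_abs_summable)
       (auto simp: g_def A_def mult_left_mono)
  also have "\<dots> = M * (measure_pmf.prob q A - measure_pmf.prob p A)"
    by (subst infsetsum_cmult_left)
       (auto simp: infsetsum_diff[OF pmf_abs_summable pmf_abs_summable]
         measure_pmf_conv_infsetsum mult.commute)
  finally show ?thesis .
qed

lemma d_TV_commute: "d_TV p q = d_TV q p"
  unfolding d_TV_def by (simp add: abs_minus_commute)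

lemma prob_diff_le_d_TV: "\<bar>measure_pmf.prob p A - measure_pmf.prob q A\<bar> \<le> d_TV p q"
  unfolding d_TV_def
proof (rule cSUP_upper)
  have "\<bar>measure_pmf.prob p B - measure_pmf.prob q B\<bar> \<le> 1" for B
    using measure_pmf.prob_le_1[of p B] measure_pmf.prob_le_1[of q B]
      measure_nonneg[of p B] measure_nonneg[of q B] by linarith
  then show "bdd_above (range (\<lambda>B. \<bar>measure_pmf.prob p B - measure_pmf.prob q B\<bar>))"
    by (intro bdd_aboveI[of _ 1]) auto
qed simp

lemma expectation_diff_le_d_TV:
  fixes f :: "nat \<Rightarrow> real"
  assumes "\<And>n. 0 \<le> f n" and "\<And>n. f n \<le> M"
  shows "measure_pmf.expectation q f - measure_pmf.expectation p f \<le> M * d_TV q p"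
proof -
  let ?A = "{n. pmf p n \<le> pmf q n}"
  have "0 \<le> M"
    using assms[of 0] by simp
  then have "M * (measure_pmf.prob q ?A - measure_pmf.prob p ?A) \<le> M * d_TV q p"
    using prob_diff_le_d_TV[of q ?A p] by (intro mult_left_mono) auto
  with expectation_diff_le_prob_diff[where f = f and p = p and q = q, OF assms] show ?thesis
    by linarith
qed

lemma cINF_le_cINF_add:
  fixes F G :: "'c \<Rightarrow> real"
  assumes "S \<noteq> {}" and "bdd_below (F ` S)" and "\<And>c. c \<in> S \<Longrightarrow> F c \<le> G c + D"
  shows "(INF c\<in>S. F c) \<le> (INF c\<in>S. G c) + D"
proof -
  have "(INF c\<in>S. F c) - D \<le> (INF c\<in>S. G c)"
  proof (rule cINF_greatest[OF assms(1)])
    fix c assume "c \<in> S"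
    then show "(INF c\<in>S. F c) - D \<le> G c"
      using cINF_lower[OF assms(2) \<open>c \<in> S\<close>] assms(3)[of c] by simp
  qed
  then show ?thesis by simp
qed

lemma markovian_coupling_pair_pmf:
  "markovian_coupling mX nuX mY nuY (pair_pmf nuX nuY) (\<lambda>t (x, y). pair_pmf (mX x) (mY y))"
  unfolding markovian_coupling_def is_coupling_def
  by (simp add: map_fst_pair_pmf map_snd_pair_pmf)

lemma d_OTM_le_add_d_TV:
  assumes C_nonneg: "\<And>x y. 0 \<le> C x y" and C_le: "\<And>x y. C x y \<le> M"
  shows "d_OTM q mX nuX mY nuY C \<le> d_OTM q' mX nuX mY nuY C + M * d_TV q q'"
proof -
  define S where "S = {(\<pi>0, K). markovian_coupling mX nuX mY nuY \<pi>0 K}"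
  define cost where "cost \<pi>K t = measure_pmf.expectation (coupling_law (fst \<pi>K) (snd \<pi>K) t)
                                   (\<lambda>(x, y). C x y)" for \<pi>K t
  have cost_nonneg: "0 \<le> cost \<pi>K t" for \<pi>K t
    unfolding cost_def by (rule integral_nonneg_AE) (auto simp: C_nonneg)
  have cost_le: "cost \<pi>K t \<le> M" for \<pi>K t
    unfolding cost_def
    using C_nonneg C_le
    by (intro measure_pmf.integral_le_const measure_pmf.integrable_const_bound[where B = M]) auto
  have "S \<noteq> {}"
    using markovian_coupling_pair_pmf unfolding S_def by blast
  moreover have "bdd_below ((\<lambda>\<pi>K. measure_pmf.expectation q (cost \<pi>K)) ` S)"
    using cost_nonneg by (intro bdd_belowI[of _ 0]) (auto intro: integral_nonneg_AE)
  moreover have "measure_pmf.expectation q (cost \<pi>K)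
                   \<le> measure_pmf.expectation q' (cost \<pi>K) + M * d_TV q q'" for \<pi>K
    using expectation_diff_le_d_TV[of "cost \<pi>K" M q q'] cost_nonneg cost_le by simp
  ultimately show ?thesis
    unfolding d_OTM_def S_def[symmetric] cost_def[abs_def] by (rule cINF_le_cINF_add)
qed

lemma abs_d_OTM_diff_le_d_TV:
  assumes "\<And>x y. 0 \<le> C x y" and "\<And>x y. C x y \<le> M"
  shows "\<bar>d_OTM q mX nuX mY nuY C - d_OTM q' mX nuX mY nuY C\<bar> \<le> M * d_TV q q'"
  using d_OTM_le_add_d_TV[where C = C, OF assms, of q mX nuX mY nuY q']
    d_OTM_le_add_d_TV[where C = C, OF assms, of q' mX nuX mY nuY q]
  by (auto simp: abs_le_iff d_TV_commute[of q' q])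

theorem lemma9:
  fixes mX :: "'x::finite \<Rightarrow> 'x pmf" and nuX :: "'x pmf"
    and mY :: "'y::finite \<Rightarrow> 'y pmf" and nuY :: "'y pmf"
    and C :: "'x \<Rightarrow> 'y \<Rightarrow> real"
    and p :: "nat pmf" and ps :: "nat \<Rightarrow> nat pmf"
  assumes "\<And>x y. C x y \<ge> 0"
    and "(\<lambda>k. d_TV (ps k) p) \<longlonglongrightarrow> 0"
  shows "(\<lambda>k. d_OTM (ps k) mX nuX mY nuY C) \<longlonglongrightarrow> d_OTM p mX nuX mY nuY C"
proof -
  define M where "M = Max (range (\<lambda>(x, y). C x y))"
  have "C x y \<le> M" for x y
    unfolding M_def by (rule Max_ge) auto
  then have "\<forall>k. norm (d_OTM (ps k) mX nuX mY nuY C - d_OTM p mX nuX mY nuY C)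
                  \<le> M * d_TV (ps k) p"
    using abs_d_OTM_diff_le_d_TV[where C = C, OF assms(1)] by simp
  moreover have "(\<lambda>k. M * d_TV (ps k) p) \<longlonglongrightarrow> 0"
    using tendsto_mult_right_zero[OF assms(2)] by simp
  ultimately have "(\<lambda>k. d_OTM (ps k) mX nuX mY nuY C - d_OTM p mX nuX mY nuY C) \<longlonglongrightarrow> 0"
    by (rule Lim_null_comparison[OF always_eventually])
  then show ?thesis
    by (simp add: LIM_zero_iff)
qed

end
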